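(* Let $k$ be a field of characteristic $\neq 2$ and let $\mathfrak f$ be the Lie algebra over $k$ generated by $z_0,z_1,z_2$ subject to the relations, for every $i\in\{0,1,2\}$ with indices taken modulo $3$: $[[z_i,z_{i+1}],z_{i+2}]=0$; $[z_i,[z_i,z_{i+1}]]=z_{i+1}+[z_{i+2},z_i]$; $\bigl[[z_{i+1},[z_{i+1},[z_{i+1},z_i]]],[z_{i+1},z_i]\bigr]=0$. Then for any $i,j\in\{0,1,2\}$ (indices modulo $3$): $[(\mathrm{ad}_{z_i})^2(z_j),z_j]=0$; $\bigl[[z_{i-1},z_i],[z_i,z_{i+1}]\bigr]=z_i$; and $(\mathrm{ad}_{[z_i,z_{i+1}]})^3(z_{i+1})=(\mathrm{ad}_{z_{i+1}})^2(z_i)-(\mathrm{ad}_{z_{i+1}})^4(z_i)$. *)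

theory Defs
  imports Main "HOL.Modules"
begin

definition lie_algebra :: "('k::field \<Rightarrow> 'v::ab_group_add \<Rightarrow> 'v) \<Rightarrow> ('v \<Rightarrow> 'v \<Rightarrow> 'v) \<Rightarrow> bool" where
  "lie_algebra sc br \<longleftrightarrow>
     module sc \<and>
     (\<forall>x y z. br (x + y) z = br x z + br y z) \<and>
     (\<forall>x y z. br x (y + z) = br x y + br x z) \<and>
     (\<forall>a x y. br (sc a x) y = sc a (br x y)) \<and>
     (\<forall>a x y. br x (sc a y) = sc a (br x y)) \<and>
     (\<forall>x. br x x = 0) \<and>
     (\<forall>x y z. br x (br y z) + br y (br z x) + br z (br x y) = 0)"

definition ad :: "('v \<Rightarrow> 'v \<Rightarrow> 'v) \<Rightarrow> 'v \<Rightarrow> 'v \<Rightarrow> 'v" where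
  "ad br x = (\<lambda>y. br x y)"

definition f_relations :: "('v::ab_group_add \<Rightarrow> 'v \<Rightarrow> 'v) \<Rightarrow> (nat \<Rightarrow> 'v) \<Rightarrow> bool" where
  "f_relations br z \<longleftrightarrow>
    (\<forall>i<3. br (br (z i) (z ((i+1) mod 3))) (z ((i+2) mod 3)) = 0 \<and>
           br (z i) (br (z i) (z ((i+1) mod 3))) = z ((i+1) mod 3) + br (z ((i+2) mod 3)) (z i) \<and>
           br (br (z ((i+1) mod 3)) (br (z ((i+1) mod 3)) (br (z ((i+1) mod 3)) (z i))))
              (br (z ((i+1) mod 3)) (z i)) = 0)"

end

theory Submission
  imports Defs
begin

text \<open>Write \<open>x, y, w\<close> for \<open>z\<^sub>i, z\<^sub>i\<^sub>+\<^sub>1, z\<^sub>i\<^sub>+\<^sub>2\<close>.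
The first identity is immediate from the relations for \<open>j = i, i+1\<close>, and for \<open>j = i+2\<close> it
takes one application of the Jacobi identity, as does the second. For the third put
\<open>u = [x,y]\<close>, \<open>p = [u,y]\<close>, \<open>q = [u,p]\<close>, \<open>r = [y,p]\<close>: the goal becomes \<open>[y,r] = p - [u,q]\<close>.
The second identity for the next index gives \<open>[u,[y,w]] = y\<close>, and the cubic relation says \<open>[u,r] = 0\<close>; pushing \<open>ad\<^sub>u\<close> and \<open>ad\<^sub>y\<close> through
these as derivations yields \<open>[q,w] = p\<close>, \<open>[y,q] = 0\<close> and \<open>[q,[y,w]] = r\<close>, whence
\<open>[y,r] = [q,[y,[y,w]]] = [q,w + u] = p - [u,q]\<close>.\<close>

locale lie_ring =
  fixes br :: "'v::ab_group_add \<Rightarrow> 'v \<Rightarrow> 'v"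
  assumes bracket_add_left: "br (a + b) c = br a c + br b c"
    and bracket_add_right: "br a (b + c) = br a b + br a c"
    and bracket_self: "br a a = 0"
    and jacobi: "br a (br b c) + br b (br c a) + br c (br a b) = 0"
begin

lemma bracket_zero_left [simp]: "br 0 a = 0"
  using bracket_add_left[of 0 0 a] by simp

lemma bracket_zero_right [simp]: "br a 0 = 0"
  using bracket_add_right[of a 0 0] by simp

lemma bracket_antisym: "br a b = - br b a"
proof -
  have "br (a + b) (a + b) = 0" by (rule bracket_self)
  then have "br a a + br b a + (br a b + br b b) = 0"
    by (simp add: bracket_add_left bracket_add_right)
  then show ?thesis by (simp add: bracket_self eq_neg_iff_add_eq_0 add.commute)
qed

lemma bracket_neg_left: "br (- a) b = - br a b"
  using bracket_add_left[of a "- a" b] by (simp add: eq_neg_iff_add_eq_0 add.commute)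

lemma bracket_neg_right: "br a (- b) = - br a b"
  using bracket_add_right[of a b "- b"] by (simp add: eq_neg_iff_add_eq_0 add.commute)

lemma bracket_diff_right: "br a (b - c) = br a b - br a c"
  using bracket_add_right[of a b "- c"] by (simp add: bracket_neg_right)

lemma bracket_leibniz: "br a (br b c) = br (br a b) c + br b (br a c)"
proof -
  have "br a (br b c) = - br b (br c a) - br c (br a b)"
    using jacobi[of a b c] by (simp add: algebra_simps eq_neg_iff_add_eq_0)
  also have "br b (br c a) = - br b (br a c)"
    using bracket_antisym[of c a] by (simp add: bracket_neg_right)
  also have "br c (br a b) = - br (br a b) c"
    by (rule bracket_antisym)
  finally show ?thesis by simp
qed

lemma bracket_ad_square_self: "br (br a (br a a)) a = 0"
  by (simp add: bracket_self)

lemma bracket_ad_square_next: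
  assumes "br (br w x) y = 0" and "br x (br x y) = y + br w x"
  shows "br (br x (br x y)) y = 0"
  using assms by (simp add: bracket_add_left bracket_self)

lemma bracket_ad_square_prev:
  assumes "br (br y w) x = 0" and "br w (br w x) = x + br y w"
  shows "br (br x (br x w)) w = 0"
proof -
  have "br x (br (br w x) w) = br (br x (br w x)) w + br (br w x) (br x w)"
    by (rule bracket_leibniz)
  moreover have "br (br w x) w = - (x + br y w)"
    using assms(2) bracket_antisym[of "br w x" w] by simp
  moreover have "br x (br y w) = 0"
    using assms(1) bracket_antisym[of x "br y w"] by simp
  moreover have "br (br w x) (br x w) = 0"
    using bracket_antisym[of x w] by (simp add: bracket_neg_right bracket_self)
  ultimately have "br (br x (br w x)) w = 0"
    by (simp add: bracket_diff_right bracket_neg_right bracket_self)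
  moreover have "br x (br x w) = - br x (br w x)"
    using bracket_antisym[of x w] by (simp add: bracket_neg_right)
  ultimately show ?thesis by (simp add: bracket_neg_left)
qed

lemma bracket_commutators:
  assumes "br (br x y) w = 0"
    and "br x (br x y) = y + br w x"
    and "br w (br w x) = x + br y w"
  shows "br (br w x) (br x y) = x"
proof -
  have "br w (br x (br x y)) = br (br w x) (br x y) + br x (br w (br x y))"
    by (rule bracket_leibniz)
  moreover have "br w (br x y) = 0"
    using assms(1) bracket_antisym[of w "br x y"] by simp
  moreover have "br w (br x (br x y)) = x"
    using assms(2,3) bracket_antisym[of w y] by (simp add: bracket_add_right)
  ultimately show ?thesis by simp
qed

lemma bracket_ad_cube:
  assumes r1: "br (br x y) w = 0" "br (br y w) x = 0"
    and r2: "br x (br x y) = y + br w x" "br y (br y w) = w + br x y"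
    and r3: "br (br y (br y (br y x))) (br y x) = 0"
  shows "br (br x y) (br (br x y) (br (br x y) y))
           = br y (br y x) - br y (br y (br y (br y x)))"
proof -
  define u where "u = br x y"
  define v where "v = br y w"
  define p where "p = br u y"
  define q where "q = br u p"
  define r where "r = br y p"
  have yx: "br y x = - u"
    unfolding u_def by (rule bracket_antisym)
  have yyx: "br y (br y x) = p"
    unfolding p_def yx bracket_neg_right using bracket_antisym[of u y] by simp
  have uv: "br u v = y"
    unfolding u_def v_def by (rule bracket_commutators[OF r1(2) r2(2) r2(1)])
  have wu: "br w u = 0"
    using r1(1) bracket_antisym[of w u] by (simp add: u_def)
  have "br y (br y (br y x)) = r"
    by (simp add: yyx r_def)
  then have "br r u = 0"
    using r3 by (simp add: yx bracket_neg_right)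
  then have ur: "br u r = 0"
    using bracket_antisym[of u r] by simp
  have yq: "br y q = 0"
  proof -
    have "br y q = br (br y u) p + br u r"
      unfolding q_def r_def by (rule bracket_leibniz)
    moreover have "br y u = - p"
      unfolding p_def by (rule bracket_antisym)
    ultimately show ?thesis
      using ur by (simp add: bracket_neg_left bracket_self)
  qed
  have pw: "br p w = y"
  proof -
    have "br w p = br (br w u) y + br u (br w y)"
      unfolding p_def by (rule bracket_leibniz)
    moreover have "br w y = - v"
      unfolding v_def by (rule bracket_antisym)
    ultimately have "br w p = - y"
      using wu uv by (simp add: bracket_neg_right)
    then show ?thesis using bracket_antisym[of p w] by simp
  qed
  have qw: "br q w = p"
  proof -
    have "br u (br p w) = br (br u p) w + br p (br u w)"
      by (rule bracket_leibniz)
    moreover have "br u w = 0"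
      using r1(1) by (simp add: u_def)
    ultimately show ?thesis using pw by (simp add: q_def p_def)
  qed
  have qv: "br q v = r"
  proof -
    have "br y (br q w) = br (br y q) w + br q (br y w)"
      by (rule bracket_leibniz)
    then show ?thesis using qw yq by (simp add: r_def v_def)
  qed
  have yr: "br y r = p - br u q"
  proof -
    have "br y (br q v) = br (br y q) v + br q (br y v)"
      by (rule bracket_leibniz)
    moreover have "br y v = w + u"
      using r2(2) by (simp add: u_def v_def)
    ultimately have "br y r = br q w + br q u"
      using qv yq by (simp add: bracket_add_right)
    then show ?thesis using qw bracket_antisym[of q u] by simp
  qed
  show ?thesis
    unfolding yyx u_def[symmetric] p_def[symmetric] q_def[symmetric] r_def[symmetric]
    using yr by simp
qed

end

lemma lie_algebra_imp_lie_ring: "lie_algebra sc br \<Longrightarrow> lie_ring br"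
  unfolding lie_algebra_def by unfold_locales auto

lemma nat_less_3_cases: "(i::nat) < 3 \<Longrightarrow> i = 0 \<or> i = 1 \<or> i = 2"
  by auto

lemma f_relations_cyclic:
  assumes "f_relations br z" and "i < 3"
  defines "x \<equiv> z i" and "y \<equiv> z ((i+1) mod 3)" and "w \<equiv> z ((i+2) mod 3)"
  shows "br (br x y) w = 0" "br (br y w) x = 0" "br (br w x) y = 0"
    and "br x (br x y) = y + br w x" "br y (br y w) = w + br x y" "br w (br w x) = x + br y w"
    and "br (br y (br y (br y x))) (br y x) = 0"
proof -
  have rel: "br (br (z k) (z ((k+1) mod 3))) (z ((k+2) mod 3)) = 0"
      "br (z k) (br (z k) (z ((k+1) mod 3))) = z ((k+1) mod 3) + br (z ((k+2) mod 3)) (z k)"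
      "br (br (z ((k+1) mod 3)) (br (z ((k+1) mod 3)) (br (z ((k+1) mod 3)) (z k))))
        (br (z ((k+1) mod 3)) (z k)) = 0"
    if "k < 3" for k
    using assms(1) that unfolding f_relations_def by blast+
  have rotate: "((i+1) mod 3 + 1) mod 3 = (i+2) mod 3" "((i+1) mod 3 + 2) mod 3 = i"
      "((i+2) mod 3 + 1) mod 3 = i" "((i+2) mod 3 + 2) mod 3 = (i+1) mod 3"
    using nat_less_3_cases[OF \<open>i < 3\<close>] by auto
  show "br (br x y) w = 0" "br x (br x y) = y + br w x"
      "br (br y (br y (br y x))) (br y x) = 0"
    using rel[OF \<open>i < 3\<close>] unfolding x_def y_def w_def by auto
  show "br (br y w) x = 0" "br y (br y w) = w + br x y"
    using rel[of "(i+1) mod 3"] unfolding rotate x_def y_def w_def by auto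
  show "br (br w x) y = 0" "br w (br w x) = x + br y w"
    using rel[of "(i+2) mod 3"] unfolding rotate x_def y_def w_def by auto
qed

lemma ad_funpow_numeral:
  "(ad br a ^^ 2) b = br a (br a b)"
  "(ad br a ^^ 3) b = br a (br a (br a b))"
  "(ad br a ^^ 4) b = br a (br a (br a (br a b)))"
  by (simp_all add: ad_def numeral_eq_Suc)

theorem lemma5p1:
  fixes sc :: "'k::field \<Rightarrow> 'v::ab_group_add \<Rightarrow> 'v"
    and br :: "'v \<Rightarrow> 'v \<Rightarrow> 'v"
    and z :: "nat \<Rightarrow> 'v"
  assumes "CHAR('k) \<noteq> 2"
    and "lie_algebra sc br"
    and "f_relations br z"
  shows "\<forall>i<3. \<forall>j<3.
      br (((ad br (z i)) ^^ 2) (z j)) (z j) = 0 \<and>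
      br (br (z ((i+2) mod 3)) (z i)) (br (z i) (z ((i+1) mod 3))) = z i \<and>
      ((ad br (br (z i) (z ((i+1) mod 3)))) ^^ 3) (z ((i+1) mod 3))
        = ((ad br (z ((i+1) mod 3))) ^^ 2) (z i) - ((ad br (z ((i+1) mod 3))) ^^ 4) (z i)"
  apply (intro allI impI)
  subgoal premises indices for i j
  proof -
    interpret lie_ring br
      using assms(2) by (rule lie_algebra_imp_lie_ring)
    note rel = f_relations_cyclic[OF assms(3) indices(1)]
    have "j = i \<or> j = (i+1) mod 3 \<or> j = (i+2) mod 3"
      using nat_less_3_cases[OF indices(1)] nat_less_3_cases[OF indices(2)] by auto
    then have "br (br (z i) (br (z i) (z j))) (z j) = 0"
      using bracket_ad_square_self bracket_ad_square_next[OF rel(3,4)]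
        bracket_ad_square_prev[OF rel(2,6)] by auto
    then show ?thesis
      unfolding ad_funpow_numeral
      using bracket_commutators[OF rel(1,4,6)] bracket_ad_cube[OF rel(1,2,4,5,7)] by blast
  qed
  done

end
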